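(* Let $q\ge 1$, $n\ge1$ and $\theta\ge 1$ be integers, and let $X=(X_1,\dots,X_n)$ be a random vector with values in $[q]^n$. Let $\sigma$ be a uniformly random permutation of $[n]$, independent of $X$. Then $$\mathbb E_{X,\sigma}\left[\sum_{i=\theta}^n \mathrm{TV}\Big(\big(X_{\sigma(i)}\mid \{X_{\sigma(j)}\}_{j\in[i-\theta]}\big),\ \big(X_{\sigma(i)}\mid \{X_{\sigma(j)}\}_{j\in[i-1]}\big)\Big)^2\right]\le \frac{(\theta-1)\log q}{2}.$$
   Context: $\mathrm{TV}$ is total variation distance and $\log$ is the natural logarithm. For a set $J$ of indices, $(X_k\mid\{X_j\}_{j\in J})$ denotes the conditional law of $X_k$ given the values of $(X_j)_{j\in J}$, evaluated at the realized values of $X$ (so it is a random distribution on $[q]$); $[0]=\emptyset$. *)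

theory Defs
  imports "HOL-Probability.Probability"
begin

definition cond_law :: "(nat \<Rightarrow> nat) pmf \<Rightarrow> nat set \<Rightarrow> nat \<Rightarrow> (nat \<Rightarrow> nat) \<Rightarrow> nat \<Rightarrow> real" where
  "cond_law p J k x a =
     measure_pmf.prob p {y. y k = a \<and> (\<forall>j\<in>J. y j = x j)} /
     measure_pmf.prob p {y. \<forall>j\<in>J. y j = x j}"

definition tv_dist :: "nat \<Rightarrow> (nat \<Rightarrow> real) \<Rightarrow> (nat \<Rightarrow> real) \<Rightarrow> real" where
  "tv_dist q P Q = (1/2) * (\<Sum>a\<in>{1..q}. \<bar>P a - Q a\<bar>)"

end

theory Submission
  imports Defs
begin

text \<open>
  Fix \<open>\<sigma>\<close> and \<open>i\<close>, and write \<open>A = \<sigma>[i-\<theta>] \<subseteq> B = \<sigma>[i-1]\<close>, \<open>k = \<sigma>(i)\<close>. By Pinsker's inequality the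
  expected squared total variation distance between the laws of \<open>X_k\<close> given \<open>X_A\<close> and given \<open>X_B\<close> is
  at most half the expected Kullback-Leibler divergence between them, and by the tower property
  this divergence is \<open>(H(X_{A+k}) - H(X_A)) - (H(X_{B+k}) - H(X_B))\<close>. Averaged over \<open>\<sigma>\<close>, the set
  \<open>A + k\<close> is distributed like the prefix \<open>\<sigma>[i-\<theta>+1]\<close>; so if \<open>D_m\<close> is the average entropy gain of
  the \<open>m\<close>-th prefix, the whole sum is at most \<open>\<Sum>_i (D_{i-\<theta>+1} - D_i) / 2\<close>. This telescopes to at
  most \<open>\<theta> - 1\<close> gains, each lying in \<open>[0, log q]\<close>. Coordinates outside \<open>[n]\<close> play no role, and
  discarding them makes the law of \<open>X\<close> finitely supported.
\<close>

section \<open>Pinsker's inequality\<close>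

lemma four_mult_one_minus_le_1: "4 * t * (1 - t) \<le> (1::real)"
  using zero_le_power2[of "2 * t - 1"] by (simp add: power2_eq_square algebra_simps)

lemma binary_pinsker_lt_1:
  fixes p r :: real
  assumes "0 < r" "r \<le> p" "p < 1"
  shows "2 * (p - r)^2 \<le> p * ln (p / r) + (1 - p) * ln ((1 - p) / (1 - r))"
proof -
  define f where "f t = - p * ln t - (1 - p) * ln (1 - t) - 2 * (p - t)^2" for t
  have "f p \<le> f r"
  proof (rule DERIV_nonpos_imp_nonincreasing[OF \<open>r \<le> p\<close>])
    fix t assume t: "r \<le> t" "t \<le> p"
    then have "0 < t" "t < 1" using assms by auto
    then have "DERIV f t :> - p * (1 / t) - (1 - p) * (- 1 / (1 - t)) - 2 * (2 * (p - t) * - 1)"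
      unfolding f_def by (auto intro!: derivative_eq_intros)
    also have "- p * (1 / t) - (1 - p) * (- 1 / (1 - t)) - 2 * (2 * (p - t) * - 1)
             = (p - t) * (4 - 1 / (t * (1 - t)))"
      using \<open>0 < t\<close> \<open>t < 1\<close> by (simp add: field_simps)
    finally have "DERIV f t :> (p - t) * (4 - 1 / (t * (1 - t)))" .
    moreover have "4 \<le> 1 / (t * (1 - t))"
      using four_mult_one_minus_le_1[of t] \<open>0 < t\<close> \<open>t < 1\<close> by (simp add: field_simps)
    then have "(p - t) * (4 - 1 / (t * (1 - t))) \<le> 0"
      using t by (intro mult_nonneg_nonpos) auto
    ultimately show "\<exists>y. DERIV f t :> y \<and> y \<le> 0" by blast
  qed
  then show ?thesis
    using assms unfolding f_def by (simp add: ln_div algebra_simps)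
qed

lemma binary_pinsker_eq_1:
  fixes r :: real
  assumes "0 < r" "r \<le> 1"
  shows "2 * (1 - r)^2 \<le> ln (1 / r)"
proof -
  define f where "f t = - ln t - 2 * (1 - t)^2" for t :: real
  have "f 1 \<le> f r"
  proof (rule DERIV_nonpos_imp_nonincreasing[OF \<open>r \<le> 1\<close>])
    fix t assume t: "r \<le> t" "t \<le> 1"
    then have "0 < t" using assms by auto
    then have "DERIV f t :> 4 * (1 - t) - 1 / t"
      unfolding f_def by (auto intro!: derivative_eq_intros)
    moreover have "4 * (1 - t) \<le> 1 / t"
      using four_mult_one_minus_le_1[of t] \<open>0 < t\<close> by (simp add: field_simps)
    ultimately show "\<exists>y. DERIV f t :> y \<and> y \<le> 0" by auto
  qed
  then show ?thesis
    using assms unfolding f_def by (simp add: ln_div)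
qed

lemma binary_pinsker:
  fixes p r :: real
  assumes "0 < r" "r \<le> p" "p \<le> 1" "r < 1"
  shows "2 * (p - r)^2 \<le> p * ln (p / r) + (1 - p) * ln ((1 - p) / (1 - r))"
proof (cases "p < 1")
  case True
  then show ?thesis using binary_pinsker_lt_1 assms by blast
next
  case False
  then show ?thesis using binary_pinsker_eq_1[of r] assms by simp
qed

lemma log_sum_inequality:
  fixes P Q :: "'a \<Rightarrow> real"
  assumes "finite A" "\<And>a. a \<in> A \<Longrightarrow> 0 \<le> P a" "\<And>a. a \<in> A \<Longrightarrow> 0 \<le> Q a"
    and "\<And>a. a \<in> A \<Longrightarrow> Q a = 0 \<Longrightarrow> P a = 0"
  shows "sum P A * ln (sum P A / sum Q A) \<le> (\<Sum>a\<in>A. P a * ln (P a / Q a))"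
proof (cases "sum P A = 0")
  case True
  then have "\<forall>a\<in>A. P a = 0" using sum_nonneg_eq_0_iff assms(1,2) by blast
  then show ?thesis by simp
next
  case False
  then obtain a0 where "a0 \<in> A" "P a0 \<noteq> 0" by (meson sum.neutral)
  then have "0 < Q a0" using assms(3,4) by force
  moreover have "Q a0 \<le> sum Q A"
    using \<open>a0 \<in> A\<close> assms(1,3) by (intro member_le_sum) auto
  ultimately have sQ: "0 < sum Q A" by linarith
  define c where "c = sum P A / sum Q A"
  have c: "0 < c"
    unfolding c_def using False sQ sum_nonneg[of A P] assms(2) by force
  \<comment> \<open>termwise \<open>ln x \<le> x - 1\<close> at \<open>x = Q a * c / P a\<close>\<close>
  have "P a - Q a * c \<le> P a * ln (P a / Q a) - P a * ln c" if "a \<in> A" for a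
  proof (cases "P a = 0")
    case False
    then have "0 < P a" "0 < Q a" using that assms(2-4) by force+
    have pos: "0 < Q a * c / P a" using c \<open>0 < P a\<close> \<open>0 < Q a\<close> by simp
    have "ln (Q a * c / P a) = ln c - ln (P a / Q a)"
      using c \<open>0 < P a\<close> \<open>0 < Q a\<close> by (simp add: ln_div ln_mult)
    moreover have "P a * ln (Q a * c / P a) \<le> P a * (Q a * c / P a - 1)"
      using ln_le_minus_one[OF pos] \<open>0 < P a\<close> by (simp add: mult_left_mono)
    ultimately have "P a * (ln c - ln (P a / Q a)) \<le> P a * (Q a * c / P a - 1)" by simp
    also have "\<dots> = Q a * c - P a"
      using \<open>0 < P a\<close> by (simp add: field_simps)
    finally show ?thesis by (simp add: algebra_simps)
  qed (use assms(3) c that in simp)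
  then have "(\<Sum>a\<in>A. P a - Q a * c) \<le> (\<Sum>a\<in>A. P a * ln (P a / Q a) - P a * ln c)"
    by (rule sum_mono)
  moreover have "(\<Sum>a\<in>A. Q a * c) = sum P A"
  proof -
    have "(\<Sum>a\<in>A. Q a * c) = sum Q A * c" by (rule sum_distrib_right[symmetric])
    then show ?thesis using sQ unfolding c_def by simp
  qed
  moreover have "(\<Sum>a\<in>A. P a * ln (P a / Q a) - P a * ln c)
      = (\<Sum>a\<in>A. P a * ln (P a / Q a)) - sum P A * ln c"
    by (simp add: sum_subtractf sum_distrib_right)
  moreover have "(\<Sum>a\<in>A. P a - Q a * c) = sum P A - (\<Sum>a\<in>A. Q a * c)"
    by (rule sum_subtractf)
  ultimately show ?thesis
    unfolding c_def[symmetric] by linarith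
qed

lemma entropy_le_ln_card:
  fixes P :: "'a \<Rightarrow> real"
  assumes "finite A" "A \<noteq> {}" "\<And>a. a \<in> A \<Longrightarrow> 0 \<le> P a" "sum P A = 1"
  shows "(\<Sum>a\<in>A. - P a * ln (P a)) \<le> ln (card A)"
  using log_sum_inequality[of A P "\<lambda>_. 1"] assms
  by (simp add: ln_div sum_negf card_gt_0_iff)

lemma tv_eq_excess_mass:
  fixes P Q :: "'a \<Rightarrow> real"
  assumes "finite S" "sum P S = 1" "sum Q S = 1"
  shows "(1/2) * (\<Sum>a\<in>S. \<bar>Q a - P a\<bar>) = sum P {a\<in>S. Q a \<le> P a} - sum Q {a\<in>S. Q a \<le> P a}"
proof -
  define A where "A = {a\<in>S. Q a \<le> P a}"
  have split: "sum f S = sum f A + sum f (S - A)" for f :: "'a \<Rightarrow> real"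
    using sum.subset_diff[of A S f] assms(1) unfolding A_def by auto
  have "(\<Sum>a\<in>A. \<bar>Q a - P a\<bar>) = (\<Sum>a\<in>A. P a - Q a)"
    unfolding A_def by (intro sum.cong) auto
  moreover have "(\<Sum>a\<in>S - A. \<bar>Q a - P a\<bar>) = (\<Sum>a\<in>S - A. Q a - P a)"
    unfolding A_def by (intro sum.cong) auto
  ultimately have "(\<Sum>a\<in>S. \<bar>Q a - P a\<bar>) = sum P A - sum Q A + (sum Q (S - A) - sum P (S - A))"
    using split[of "\<lambda>a. \<bar>Q a - P a\<bar>"] by (simp only: sum_subtractf)
  then show ?thesis
    using split[of P] split[of Q] assms(2,3) unfolding A_def[symmetric] by linarith
qed

lemma pinsker_inequality:
  fixes P Q :: "'a \<Rightarrow> real"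
  assumes fin: "finite S" and P_nonneg: "\<And>a. a \<in> S \<Longrightarrow> 0 \<le> P a" and Q_nonneg: "\<And>a. a \<in> S \<Longrightarrow> 0 \<le> Q a"
    and P1: "sum P S = 1" and Q1: "sum Q S = 1" and abs_cont: "\<And>a. a \<in> S \<Longrightarrow> Q a = 0 \<Longrightarrow> P a = 0"
  shows "((1/2) * (\<Sum>a\<in>S. \<bar>Q a - P a\<bar>))^2 \<le> (1/2) * (\<Sum>a\<in>S. P a * ln (P a / Q a))"
proof -
  define A where "A = {a\<in>S. Q a \<le> P a}"
  define pA rA where "pA = sum P A" and "rA = sum Q A"
  have "A \<subseteq> S" "finite A" "finite (S - A)" using fin unfolding A_def by auto
  have split: "sum f S = sum f A + sum f (S - A)" for f :: "'a \<Rightarrow> real"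
    using sum.subset_diff[OF \<open>A \<subseteq> S\<close> fin] by (simp add: add.commute)
  have tv: "(1/2) * (\<Sum>a\<in>S. \<bar>Q a - P a\<bar>) = pA - rA"
    using tv_eq_excess_mass[OF fin P1 Q1] unfolding pA_def rA_def A_def .
  have "rA \<le> pA" unfolding pA_def rA_def A_def by (intro sum_mono) auto
  have "0 \<le> sum P (S - A)" using P_nonneg by (intro sum_nonneg) auto
  then have "pA \<le> 1" using split[of P] P1 unfolding pA_def by linarith
  have "sum P S * ln (sum P S / sum Q S) \<le> (\<Sum>a\<in>S. P a * ln (P a / Q a))"
    using fin P_nonneg Q_nonneg abs_cont by (rule log_sum_inequality)
  then have kl_nonneg: "0 \<le> (\<Sum>a\<in>S. P a * ln (P a / Q a))"
    unfolding P1 Q1 by simp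
  show ?thesis
  proof (cases "rA = 0 \<or> rA = 1")
    case True
    have "pA = rA"
    proof (cases "rA = 0")
      case True
      then have "\<forall>a\<in>A. Q a = 0"
        using sum_nonneg_eq_0_iff[OF \<open>finite A\<close>] Q_nonneg \<open>A \<subseteq> S\<close> unfolding rA_def by blast
      then have "\<forall>a\<in>A. P a = 0" using abs_cont \<open>A \<subseteq> S\<close> by blast
      then show ?thesis using True unfolding pA_def by simp
    qed (use \<open>rA = 0 \<or> rA = 1\<close> \<open>rA \<le> pA\<close> \<open>pA \<le> 1\<close> in simp)
    then show ?thesis using tv kl_nonneg by simp
  next
    case False
    have "0 < rA"
      using False sum_nonneg[of A Q] Q_nonneg \<open>A \<subseteq> S\<close> unfolding rA_def by force
    have "rA < 1" using False \<open>rA \<le> pA\<close> \<open>pA \<le> 1\<close> by simp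
    have "pA * ln (pA / rA) \<le> (\<Sum>a\<in>A. P a * ln (P a / Q a))"
      unfolding pA_def rA_def using \<open>finite A\<close>
      by (rule log_sum_inequality) (use P_nonneg Q_nonneg abs_cont \<open>A \<subseteq> S\<close> in auto)
    moreover have "(1 - pA) * ln ((1 - pA) / (1 - rA)) \<le> (\<Sum>a\<in>S - A. P a * ln (P a / Q a))"
    proof -
      have "sum P (S - A) = 1 - pA" "sum Q (S - A) = 1 - rA"
        using split[of P] split[of Q] P1 Q1 unfolding pA_def rA_def by linarith+
      moreover have "sum P (S - A) * ln (sum P (S - A) / sum Q (S - A))
          \<le> (\<Sum>a\<in>S - A. P a * ln (P a / Q a))"
        using \<open>finite (S - A)\<close>
        by (rule log_sum_inequality) (use P_nonneg Q_nonneg abs_cont in auto)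
      ultimately show ?thesis by simp
    qed
    ultimately have "2 * (pA - rA)^2 \<le> (\<Sum>a\<in>S. P a * ln (P a / Q a))"
      using binary_pinsker[OF \<open>0 < rA\<close> \<open>rA \<le> pA\<close> \<open>pA \<le> 1\<close> \<open>rA < 1\<close>]
        split[of "\<lambda>a. P a * ln (P a / Q a)"] by linarith
    then show ?thesis unfolding tv by simp
  qed
qed

section \<open>Conditional laws and marginal entropies\<close>

definition marginal_prob :: "('i \<Rightarrow> 'v) pmf \<Rightarrow> 'i set \<Rightarrow> ('i \<Rightarrow> 'v) \<Rightarrow> real" where
  "marginal_prob p J x = measure_pmf.prob p {y. \<forall>j\<in>J. y j = x j}"

definition marginal_entropy :: "('i \<Rightarrow> 'v) pmf \<Rightarrow> 'i set \<Rightarrow> real" where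
  "marginal_entropy p J = - (\<Sum>x\<in>set_pmf p. pmf p x * ln (marginal_prob p J x))"

lemma measure_pmf_prob_eq_sum:
  assumes "finite (set_pmf p)"
  shows "measure_pmf.prob p E = (\<Sum>y\<in>set_pmf p. if y \<in> E then pmf p y else 0)"
proof -
  have "measure_pmf.prob p E = measure_pmf.prob p (set_pmf p \<inter> E)"
    by (metis measure_Int_set_pmf Int_commute)
  also have "\<dots> = (\<Sum>y\<in>set_pmf p. if y \<in> E then pmf p y else 0)"
    using assms by (simp add: measure_measure_pmf_finite sum.inter_restrict)
  finally show ?thesis .
qed

lemma marginal_prob_eq_sum:
  assumes "finite (set_pmf p)"
  shows "marginal_prob p J x = (\<Sum>y\<in>set_pmf p. if \<forall>j\<in>J. y j = x j then pmf p y else 0)"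
  unfolding marginal_prob_def by (simp add: measure_pmf_prob_eq_sum[OF assms])

lemma marginal_prob_pos:
  assumes "x \<in> set_pmf p"
  shows "0 < marginal_prob p J x"
proof -
  have "measure_pmf.prob p {x} \<le> marginal_prob p J x"
    unfolding marginal_prob_def by (intro measure_pmf.finite_measure_mono) auto
  then show ?thesis
    using pmf_positive[OF assms] by (simp add: measure_pmf_single)
qed

lemma marginal_prob_cong: "\<forall>j\<in>J. x j = y j \<Longrightarrow> marginal_prob p J x = marginal_prob p J y"
  unfolding marginal_prob_def by simp

lemma cond_law_cong: "\<forall>j\<in>J. x j = y j \<Longrightarrow> cond_law p J k x a = cond_law p J k y a"
  unfolding cond_law_def by simp

lemma cond_law_nonneg: "0 \<le> cond_law p J k x a"
  unfolding cond_law_def by simp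

lemma cond_law_at_self:
  "cond_law p J k x (x k) = marginal_prob p (insert k J) x / marginal_prob p J x"
proof -
  have "{y. y k = x k \<and> (\<forall>j\<in>J. y j = x j)} = {y. \<forall>j\<in>insert k J. y j = x j}" by auto
  then show ?thesis unfolding cond_law_def marginal_prob_def by simp
qed

lemma cond_law_sum_eq_1:
  assumes fin: "finite (set_pmf p)" and x: "x \<in> set_pmf p"
    and range: "\<forall>y\<in>set_pmf p. y k \<in> {1..q}"
  shows "(\<Sum>a\<in>{1..q}. cond_law p J k x a) = 1"
proof -
  let ?agree = "\<lambda>y. \<forall>j\<in>J. y j = x j"
  have "(\<Sum>a\<in>{1..q}. measure_pmf.prob p {y. y k = a \<and> ?agree y})
      = (\<Sum>y\<in>set_pmf p. \<Sum>a\<in>{1..q}. if y k = a \<and> ?agree y then pmf p y else 0)"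
    unfolding measure_pmf_prob_eq_sum[OF fin] mem_Collect_eq by (rule sum.swap)
  also have "\<dots> = (\<Sum>y\<in>set_pmf p. if ?agree y then pmf p y else 0)"
  proof (rule sum.cong[OF refl])
    fix y assume "y \<in> set_pmf p"
    show "(\<Sum>a\<in>{1..q}. if y k = a \<and> ?agree y then pmf p y else 0)
        = (if ?agree y then pmf p y else 0)"
    proof (cases "?agree y")
      case True
      then show ?thesis using range \<open>y \<in> set_pmf p\<close> by (simp add: sum.delta')
    next
      case False
      then show ?thesis by (simp only: simp_thms if_False sum.neutral_const)
    qed
  qed
  also have "\<dots> = marginal_prob p J x"
    by (simp add: marginal_prob_eq_sum[OF fin])
  finally show ?thesis
    using marginal_prob_pos[OF x, of J]
    by (simp add: cond_law_def marginal_prob_def flip: sum_divide_distrib)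
qed

lemma cond_law_eq_0_mono:
  assumes "A \<subseteq> B" "x \<in> set_pmf p" "cond_law p A k x a = 0"
  shows "cond_law p B k x a = 0"
proof -
  have "measure_pmf.prob p {y. y k = a \<and> (\<forall>j\<in>A. y j = x j)} = 0"
    using assms(3) marginal_prob_pos[OF assms(2), of A] by (simp add: cond_law_def marginal_prob_def)
  moreover have "measure_pmf.prob p {y. y k = a \<and> (\<forall>j\<in>B. y j = x j)}
      \<le> measure_pmf.prob p {y. y k = a \<and> (\<forall>j\<in>A. y j = x j)}"
    using assms(1) by (intro measure_pmf.finite_measure_mono) auto
  ultimately show ?thesis
    by (simp add: cond_law_def measure_le_0_iff)
qed

lemma tower_property_cond_prob:
  assumes fin: "finite (set_pmf p)" and G: "\<And>x y. \<forall>j\<in>B. x j = y j \<Longrightarrow> G x = G y"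
  shows "(\<Sum>x\<in>set_pmf p. pmf p x * G x *
            (measure_pmf.prob p {y. E y \<and> (\<forall>j\<in>B. y j = x j)} / marginal_prob p B x))
       = (\<Sum>x\<in>set_pmf p. if E x then pmf p x * G x else 0)"
proof -
  let ?S = "set_pmf p" and ?w = "pmf p"
  let ?agree = "\<lambda>x y. \<forall>j\<in>B. x j = y j"
  have "(\<Sum>x\<in>?S. ?w x * G x * (measure_pmf.prob p {y. E y \<and> (\<forall>j\<in>B. y j = x j)} / marginal_prob p B x))
      = (\<Sum>x\<in>?S. \<Sum>y\<in>?S. ?w x * G x * ((if E y \<and> ?agree y x then ?w y else 0) / marginal_prob p B x))"
    by (simp add: measure_pmf_prob_eq_sum[OF fin] sum_distrib_left sum_divide_distrib)
  also have "\<dots> = (\<Sum>y\<in>?S. \<Sum>x\<in>?S. ?w x * G x * ((if E y \<and> ?agree y x then ?w y else 0) / marginal_prob p B x))"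
    by (rule sum.swap)
  also have "\<dots> = (\<Sum>y\<in>?S. if E y then ?w y * G y else 0)"
  proof (rule sum.cong[OF refl])
    fix y assume y: "y \<in> ?S"
    have "?w x * G x * ((if E y \<and> ?agree y x then ?w y else 0) / marginal_prob p B x)
        = (if E y then G y * ?w y / marginal_prob p B y * (if ?agree x y then ?w x else 0) else 0)" for x
    proof (cases "?agree x y")
      case True
      then have "G x = G y" "marginal_prob p B x = marginal_prob p B y" "?agree y x"
        using G marginal_prob_cong by auto
      then show ?thesis using True by simp
    next
      case False
      then have "(E y \<and> ?agree y x) = False" "?agree x y = False" by metis+
      then show ?thesis by (simp only: if_False) simp
    qed
    then have "(\<Sum>x\<in>?S. ?w x * G x * ((if E y \<and> ?agree y x then ?w y else 0) / marginal_prob p B x))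
        = (if E y then G y * ?w y / marginal_prob p B y * marginal_prob p B y else 0)"
      by (simp add: marginal_prob_eq_sum[OF fin, of B y] sum_distrib_left)
    also have "\<dots> = (if E y then ?w y * G y else 0)"
      using marginal_prob_pos[OF y, of B] by simp
    finally show "(\<Sum>x\<in>?S. ?w x * G x * ((if E y \<and> ?agree y x then ?w y else 0) / marginal_prob p B x))
        = (if E y then ?w y * G y else 0)" .
  qed
  finally show ?thesis .
qed

lemma sum_pmf_cond_law_expectation:
  assumes fin: "finite (set_pmf p)" and range: "\<forall>y\<in>set_pmf p. y k \<in> {1..q}"
    and g: "\<And>x y a. \<forall>j\<in>J. x j = y j \<Longrightarrow> g x a = g y a"
  shows "(\<Sum>x\<in>set_pmf p. pmf p x * (\<Sum>a\<in>{1..q}. cond_law p J k x a * g x a))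
       = (\<Sum>x\<in>set_pmf p. pmf p x * g x (x k))"
proof -
  let ?S = "set_pmf p"
  have "(\<Sum>x\<in>?S. pmf p x * (\<Sum>a\<in>{1..q}. cond_law p J k x a * g x a))
      = (\<Sum>a\<in>{1..q}. \<Sum>x\<in>?S. pmf p x * g x a *
           (measure_pmf.prob p {y. y k = a \<and> (\<forall>j\<in>J. y j = x j)} / marginal_prob p J x))"
    by (subst sum.swap) (simp add: sum_distrib_left cond_law_def marginal_prob_def mult_ac)
  also have "\<dots> = (\<Sum>a\<in>{1..q}. \<Sum>x\<in>?S. if x k = a then pmf p x * g x a else 0)"
    using tower_property_cond_prob[OF fin, of J "\<lambda>x. g x _" "\<lambda>y. y k = _"] g by simp
  also have "\<dots> = (\<Sum>x\<in>?S. \<Sum>a\<in>{1..q}. if x k = a then pmf p x * g x a else 0)"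
    by (rule sum.swap)
  also have "\<dots> = (\<Sum>x\<in>?S. pmf p x * g x (x k))"
    using range by (intro sum.cong) (auto simp: sum.delta')
  finally show ?thesis .
qed

lemma cond_law_le_1: "cond_law p J k x a \<le> 1"
proof -
  have "measure_pmf.prob p {y. y k = a \<and> (\<forall>j\<in>J. y j = x j)} \<le> marginal_prob p J x"
    unfolding marginal_prob_def by (intro measure_pmf.finite_measure_mono) auto
  moreover have "0 \<le> marginal_prob p J x"
    unfolding marginal_prob_def by simp
  ultimately show ?thesis
    unfolding cond_law_def marginal_prob_def[symmetric]
    by (cases "marginal_prob p J x = 0") (simp_all add: divide_le_eq_1_pos)
qed

lemma cond_law_at_self_pos: "x \<in> set_pmf p \<Longrightarrow> 0 < cond_law p J k x (x k)"
  by (simp add: cond_law_at_self marginal_prob_pos)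

lemma marginal_entropy_insert_diff:
  "marginal_entropy p (insert k J) - marginal_entropy p J
     = (\<Sum>x\<in>set_pmf p. pmf p x * - ln (cond_law p J k x (x k)))"
proof -
  have "pmf p x * - ln (cond_law p J k x (x k))
      = pmf p x * ln (marginal_prob p J x) - pmf p x * ln (marginal_prob p (insert k J) x)"
    if "x \<in> set_pmf p" for x
    using marginal_prob_pos[OF that, of J] marginal_prob_pos[OF that, of "insert k J"]
    by (simp add: cond_law_at_self ln_div algebra_simps)
  then show ?thesis
    unfolding marginal_entropy_def by (simp add: sum_subtractf)
qed

lemma marginal_entropy_insert_diff_nonneg:
  fixes p :: "(nat \<Rightarrow> nat) pmf"
  shows "0 \<le> marginal_entropy p (insert k J) - marginal_entropy p J"
  unfolding marginal_entropy_insert_diff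
  using cond_law_at_self_pos cond_law_le_1 by (intro sum_nonneg mult_nonneg_nonneg) auto

lemma marginal_entropy_insert_diff_le_ln:
  fixes p :: "(nat \<Rightarrow> nat) pmf" and q :: nat
  assumes fin: "finite (set_pmf p)" and range: "\<forall>y\<in>set_pmf p. y k \<in> {1..q}"
    and "1 \<le> q"
  shows "marginal_entropy p (insert k J) - marginal_entropy p J \<le> ln (real q)"
proof -
  let ?c = "cond_law p J k"
  have "(\<Sum>x\<in>set_pmf p. pmf p x * (\<Sum>a\<in>{1..q}. ?c x a * - ln (?c x a)))
      = (\<Sum>x\<in>set_pmf p. pmf p x * - ln (?c x (x k)))"
  proof (rule sum_pmf_cond_law_expectation[OF fin range])
    fix x y :: "nat \<Rightarrow> nat" and a assume "\<forall>j\<in>J. x j = y j"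
    then show "- ln (?c x a) = - ln (?c y a)" by (simp only: cond_law_cong[of J x y])
  qed
  then have "marginal_entropy p (insert k J) - marginal_entropy p J
      = (\<Sum>x\<in>set_pmf p. pmf p x * (\<Sum>a\<in>{1..q}. ?c x a * - ln (?c x a)))"
    unfolding marginal_entropy_insert_diff by simp
  also have "\<dots> \<le> (\<Sum>x\<in>set_pmf p. pmf p x * ln q)"
  proof (intro sum_mono mult_left_mono)
    fix x assume x: "x \<in> set_pmf p"
    have "(\<Sum>a\<in>{1..q}. - ?c x a * ln (?c x a)) \<le> ln (card {1..q})"
      by (rule entropy_le_ln_card)
         (use \<open>1 \<le> q\<close> cond_law_sum_eq_1[OF fin x range] in \<open>simp_all add: cond_law_nonneg\<close>)
    then show "(\<Sum>a\<in>{1..q}. ?c x a * - ln (?c x a)) \<le> ln q" by simp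
  qed simp
  also have "\<dots> = ln q"
    using sum_pmf_eq_1[OF fin, of p] by (simp flip: sum_distrib_right)
  finally show ?thesis .
qed

lemma expected_cond_kl_eq:
  assumes fin: "finite (set_pmf p)" and "A \<subseteq> B" and range: "\<forall>y\<in>set_pmf p. y k \<in> {1..q}"
  shows "(\<Sum>x\<in>set_pmf p. pmf p x *
            (\<Sum>a\<in>{1..q}. cond_law p B k x a * ln (cond_law p B k x a / cond_law p A k x a)))
       = (marginal_entropy p (insert k A) - marginal_entropy p A)
         - (marginal_entropy p (insert k B) - marginal_entropy p B)"
proof -
  have "(\<Sum>x\<in>set_pmf p. pmf p x *
            (\<Sum>a\<in>{1..q}. cond_law p B k x a * ln (cond_law p B k x a / cond_law p A k x a)))
      = (\<Sum>x\<in>set_pmf p. pmf p x * ln (cond_law p B k x (x k) / cond_law p A k x (x k)))"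
  proof (rule sum_pmf_cond_law_expectation[OF fin range])
    fix x y :: "nat \<Rightarrow> nat" and a assume "\<forall>j\<in>B. x j = y j"
    moreover from this have "\<forall>j\<in>A. x j = y j" using \<open>A \<subseteq> B\<close> by blast
    ultimately show "ln (cond_law p B k x a / cond_law p A k x a) = ln (cond_law p B k y a / cond_law p A k y a)"
      by (simp add: cond_law_cong[of B x y] cond_law_cong[of A x y])
  qed
  also have "\<dots> = (\<Sum>x\<in>set_pmf p. pmf p x * - ln (cond_law p A k x (x k)))
                 - (\<Sum>x\<in>set_pmf p. pmf p x * - ln (cond_law p B k x (x k)))"
    unfolding sum_subtractf[symmetric]
  proof (rule sum.cong[OF refl])
    fix x assume "x \<in> set_pmf p"
    then have "0 < cond_law p A k x (x k)" "0 < cond_law p B k x (x k)"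
      by (simp_all add: cond_law_at_self_pos)
    then show "pmf p x * ln (cond_law p B k x (x k) / cond_law p A k x (x k))
        = pmf p x * - ln (cond_law p A k x (x k)) - pmf p x * - ln (cond_law p B k x (x k))"
      by (simp add: ln_div algebra_simps)
  qed
  finally show ?thesis by (simp only: marginal_entropy_insert_diff)
qed

lemma expected_tv_sq_le_entropy:
  assumes fin: "finite (set_pmf p)" and "A \<subseteq> B" and range: "\<forall>y\<in>set_pmf p. y k \<in> {1..q}"
  shows "(\<Sum>x\<in>set_pmf p. pmf p x * (tv_dist q (cond_law p A k x) (cond_law p B k x))^2)
       \<le> ((marginal_entropy p (insert k A) - marginal_entropy p A)
          - (marginal_entropy p (insert k B) - marginal_entropy p B)) / 2"
proof -
  have "(\<Sum>x\<in>set_pmf p. pmf p x * (tv_dist q (cond_law p A k x) (cond_law p B k x))^2)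
      \<le> (\<Sum>x\<in>set_pmf p. pmf p x *
            ((1/2) * (\<Sum>a\<in>{1..q}. cond_law p B k x a * ln (cond_law p B k x a / cond_law p A k x a))))"
  proof (intro sum_mono mult_left_mono)
    fix x assume x: "x \<in> set_pmf p"
    show "(tv_dist q (cond_law p A k x) (cond_law p B k x))^2
        \<le> (1/2) * (\<Sum>a\<in>{1..q}. cond_law p B k x a * ln (cond_law p B k x a / cond_law p A k x a))"
      unfolding tv_dist_def
      using cond_law_nonneg cond_law_sum_eq_1[OF fin x range] cond_law_eq_0_mono[OF \<open>A \<subseteq> B\<close> x]
      by (intro pinsker_inequality) auto
  qed simp
  also have "\<dots> = (1/2) * (\<Sum>x\<in>set_pmf p. pmf p x *
            (\<Sum>a\<in>{1..q}. cond_law p B k x a * ln (cond_law p B k x a / cond_law p A k x a)))"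
    by (simp add: sum_distrib_left mult_ac)
  finally show ?thesis
    using expected_cond_kl_eq[OF assms] by simp
qed

section \<open>Averaging over a random ordering\<close>

lemma transpose_image_atLeastAtMost_Suc:
  assumes "a < i"
  shows "Transposition.transpose (Suc a) i ` {1..Suc a} = insert i {1..a}"
proof -
  have "Transposition.transpose (Suc a) i ` {1..a} = {1..a}"
    using assms by (auto simp: image_iff)
  moreover have "{1..Suc a} = insert (Suc a) {1..a}" by auto
  ultimately show ?thesis by simp
qed

lemma sum_permutes_image_insert:
  fixes f :: "nat set \<Rightarrow> 'b::comm_monoid_add"
  assumes "a < i" "i \<le> n"
  shows "(\<Sum>\<sigma> | \<sigma> permutes {1..n}. f (\<sigma> ` insert i {1..a}))
       = (\<Sum>\<sigma> | \<sigma> permutes {1..n}. f (\<sigma> ` {1..Suc a}))"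
proof -
  let ?t = "Transposition.transpose (Suc a) i"
  have t: "?t permutes {1..n}" using assms by (intro permutes_swap_id) auto
  show ?thesis
  proof (rule sum.reindex_bij_witness[where i = "\<lambda>\<sigma>. \<sigma> \<circ> ?t" and j = "\<lambda>\<sigma>. \<sigma> \<circ> ?t"])
    fix \<sigma> assume "\<sigma> \<in> {\<sigma>. \<sigma> permutes {1..n}}"
    then show "\<sigma> \<circ> ?t \<in> {\<sigma>. \<sigma> permutes {1..n}}" using t by (simp add: permutes_compose)
    show "\<sigma> \<circ> ?t \<circ> ?t = \<sigma>" by (simp add: comp_assoc)
    show "f ((\<sigma> \<circ> ?t) ` {1..Suc a}) = f (\<sigma> ` insert i {1..a})"
      by (simp only: image_comp[symmetric] transpose_image_atLeastAtMost_Suc[OF assms(1)])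
  qed (use t in \<open>simp_all add: comp_assoc permutes_compose\<close>)
qed

lemma sum_shifted_diff_le:
  fixes D :: "nat \<Rightarrow> real"
  assumes "1 \<le> \<theta>" "1 \<le> n" and D: "\<forall>m\<in>{1..n}. 0 \<le> D m \<and> D m \<le> L"
  shows "(\<Sum>i\<in>{\<theta>..n}. D (i + 1 - \<theta>) - D i) \<le> (real \<theta> - 1) * L"
proof (cases "\<theta> \<le> n")
  case False
  have "0 \<le> L" using D \<open>1 \<le> n\<close> by force
  then show ?thesis using False \<open>1 \<le> \<theta>\<close> by simp
next
  case True
  have shift: "(\<Sum>i\<in>{\<theta>..n}. D (i + 1 - \<theta>)) = (\<Sum>m\<in>{1..n + 1 - \<theta>}. D m)"
    using True \<open>1 \<le> \<theta>\<close>
    by (intro sum.reindex_bij_witness[where i = "\<lambda>m. m + \<theta> - 1" and j = "\<lambda>i. i + 1 - \<theta>"]) auto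
  have "{1..n} = {1..n + 1 - \<theta>} \<union> {n + 2 - \<theta>..n}" using True \<open>1 \<le> \<theta>\<close> by auto
  then have "(\<Sum>m\<in>{1..n}. D m) = (\<Sum>m\<in>{1..n + 1 - \<theta>}. D m) + (\<Sum>m\<in>{n + 2 - \<theta>..n}. D m)"
    by (simp add: sum.union_disjoint)
  moreover have "{1..n} = {1..\<theta> - 1} \<union> {\<theta>..n}" using True \<open>1 \<le> \<theta>\<close> by auto
  then have "(\<Sum>m\<in>{1..n}. D m) = (\<Sum>m\<in>{1..\<theta> - 1}. D m) + (\<Sum>m\<in>{\<theta>..n}. D m)"
    by (simp add: sum.union_disjoint)
  moreover have "0 \<le> (\<Sum>m\<in>{n + 2 - \<theta>..n}. D m)"
    using D True by (intro sum_nonneg) auto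
  moreover have "(\<Sum>m\<in>{1..\<theta> - 1}. D m) \<le> real (card {1..\<theta> - 1}) * L"
    using D True by (intro sum_bounded_above) auto
  ultimately show ?thesis
    using shift \<open>1 \<le> \<theta>\<close> by (simp add: sum_subtractf of_nat_diff)
qed

definition prefix_entropy_sum :: "(nat \<Rightarrow> nat) pmf \<Rightarrow> nat \<Rightarrow> nat \<Rightarrow> real" where
  "prefix_entropy_sum p n m = (\<Sum>\<sigma> | \<sigma> permutes {1..n}. marginal_entropy p (\<sigma> ` {1..m}))"

lemma image_atLeastAtMost_eq_insert:
  fixes m :: nat
  assumes "1 \<le> m"
  shows "\<sigma> ` {1..m} = insert (\<sigma> m) (\<sigma> ` {1..m - 1})"
proof -
  have "{1..m} = insert m {1..m - 1}" using assms by auto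
  then show ?thesis by simp
qed

lemma prefix_entropy_sum_diff_bounds:
  assumes fin: "finite (set_pmf p)" and range: "\<forall>x\<in>set_pmf p. \<forall>i\<in>{1..n}. x i \<in> {1..q}"
    and "1 \<le> q" "m \<in> {1..n}"
  shows "0 \<le> prefix_entropy_sum p n m - prefix_entropy_sum p n (m - 1)"
    and "prefix_entropy_sum p n m - prefix_entropy_sum p n (m - 1) \<le> fact n * ln (real q)"
proof -
  let ?Perm = "{\<sigma>. \<sigma> permutes {1..n}}"
  let ?d = "\<lambda>\<sigma>. marginal_entropy p (insert (\<sigma> m) (\<sigma> ` {1..m - 1})) - marginal_entropy p (\<sigma> ` {1..m - 1})"
  have diff: "prefix_entropy_sum p n m - prefix_entropy_sum p n (m - 1) = (\<Sum>\<sigma>\<in>?Perm. ?d \<sigma>)"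
    using \<open>m \<in> {1..n}\<close> unfolding prefix_entropy_sum_def
    by (subst image_atLeastAtMost_eq_insert) (simp_all add: sum_subtractf)
  show "0 \<le> prefix_entropy_sum p n m - prefix_entropy_sum p n (m - 1)"
    unfolding diff by (intro sum_nonneg marginal_entropy_insert_diff_nonneg)
  have "?d \<sigma> \<le> ln (real q)" if "\<sigma> \<in> ?Perm" for \<sigma>
  proof (rule marginal_entropy_insert_diff_le_ln[OF fin _ \<open>1 \<le> q\<close>])
    have "\<sigma> m \<in> {1..n}" using that \<open>m \<in> {1..n}\<close> by (metis mem_Collect_eq permutes_in_image)
    then show "\<forall>y\<in>set_pmf p. y (\<sigma> m) \<in> {1..q}" using range by blast
  qed
  then have "(\<Sum>\<sigma>\<in>?Perm. ?d \<sigma>) \<le> real (card ?Perm) * ln (real q)"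
    by (intro sum_bounded_above) auto
  then show "prefix_entropy_sum p n m - prefix_entropy_sum p n (m - 1) \<le> fact n * ln (real q)"
    unfolding diff by (simp add: card_permutations)
qed

lemma sum_permutes_expected_tv_sq_le:
  assumes fin: "finite (set_pmf p)" and range: "\<forall>x\<in>set_pmf p. \<forall>i\<in>{1..n}. x i \<in> {1..q}"
    and "1 \<le> \<theta>"
  shows "(\<Sum>\<sigma> | \<sigma> permutes {1..n}. \<Sum>i\<in>{\<theta>..n}. \<Sum>x\<in>set_pmf p. pmf p x *
            (tv_dist q (cond_law p (\<sigma> ` {1..i - \<theta>}) (\<sigma> i) x) (cond_law p (\<sigma> ` {1..i - 1}) (\<sigma> i) x))^2)
       \<le> (\<Sum>i\<in>{\<theta>..n}. (prefix_entropy_sum p n (i + 1 - \<theta>) - prefix_entropy_sum p n (i - \<theta>))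
                        - (prefix_entropy_sum p n i - prefix_entropy_sum p n (i - 1))) / 2"
proof -
  let ?Perm = "{\<sigma>. \<sigma> permutes {1..n}}" and ?H = "marginal_entropy p"
  let ?F = "prefix_entropy_sum p n"
  let ?gain = "\<lambda>\<sigma> i. (?H (\<sigma> ` insert i {1..i - \<theta>}) - ?H (\<sigma> ` {1..i - \<theta>}))
                     - (?H (\<sigma> ` {1..i}) - ?H (\<sigma> ` {1..i - 1}))"
  have "(\<Sum>x\<in>set_pmf p. pmf p x *
            (tv_dist q (cond_law p (\<sigma> ` {1..i - \<theta>}) (\<sigma> i) x) (cond_law p (\<sigma> ` {1..i - 1}) (\<sigma> i) x))^2)
        \<le> ?gain \<sigma> i / 2" if "\<sigma> \<in> ?Perm" "i \<in> {\<theta>..n}" for \<sigma> i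
  proof -
    have "\<sigma> i \<in> {1..n}" using that \<open>1 \<le> \<theta>\<close> by (metis mem_Collect_eq permutes_in_image atLeastAtMost_iff order_trans)
    then have "\<forall>y\<in>set_pmf p. y (\<sigma> i) \<in> {1..q}" using range by blast
    moreover have "\<sigma> ` {1..i - \<theta>} \<subseteq> \<sigma> ` {1..i - 1}" using \<open>1 \<le> \<theta>\<close> by (intro image_mono) auto
    moreover have "\<sigma> ` {1..i} = insert (\<sigma> i) (\<sigma> ` {1..i - 1})"
      using that \<open>1 \<le> \<theta>\<close> by (intro image_atLeastAtMost_eq_insert) auto
    ultimately show ?thesis
      using expected_tv_sq_le_entropy[OF fin] by simp
  qed
  then have "(\<Sum>\<sigma>\<in>?Perm. \<Sum>i\<in>{\<theta>..n}. \<Sum>x\<in>set_pmf p. pmf p x *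
            (tv_dist q (cond_law p (\<sigma> ` {1..i - \<theta>}) (\<sigma> i) x) (cond_law p (\<sigma> ` {1..i - 1}) (\<sigma> i) x))^2)
      \<le> (\<Sum>\<sigma>\<in>?Perm. \<Sum>i\<in>{\<theta>..n}. ?gain \<sigma> i / 2)"
    by (intro sum_mono) auto
  also have "\<dots> = (\<Sum>i\<in>{\<theta>..n}. \<Sum>\<sigma>\<in>?Perm. ?gain \<sigma> i) / 2"
    by (subst sum.swap) (simp add: sum_divide_distrib)
  also have "\<dots> = (\<Sum>i\<in>{\<theta>..n}. (?F (i + 1 - \<theta>) - ?F (i - \<theta>)) - (?F i - ?F (i - 1))) / 2"
  proof -
    have "(\<Sum>\<sigma>\<in>?Perm. ?H (\<sigma> ` insert i {1..i - \<theta>})) = ?F (i + 1 - \<theta>)" if "i \<in> {\<theta>..n}" for i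
      using sum_permutes_image_insert[of "i - \<theta>" i n ?H] that \<open>1 \<le> \<theta>\<close>
      by (simp add: prefix_entropy_sum_def Suc_diff_le)
    then show ?thesis
      by (simp add: sum_subtractf prefix_entropy_sum_def)
  qed
  finally show ?thesis .
qed

lemma expectation_pair_pmf_of_set:
  fixes f :: "'a \<times> 'b \<Rightarrow> real"
  assumes "finite (set_pmf p)" "finite P" "P \<noteq> {}"
  shows "measure_pmf.expectation (pair_pmf p (pmf_of_set P)) f
       = (\<Sum>\<sigma>\<in>P. \<Sum>x\<in>set_pmf p. pmf p x * f (x, \<sigma>)) / card P"
proof -
  have "measure_pmf.expectation (pair_pmf p (pmf_of_set P)) f
      = (\<Sum>z\<in>set_pmf p \<times> P. f z * pmf (pair_pmf p (pmf_of_set P)) z)"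
    using assms by (intro integral_measure_pmf_real) auto
  also have "\<dots> = (\<Sum>x\<in>set_pmf p. \<Sum>\<sigma>\<in>P. f (x, \<sigma>) * pmf (pair_pmf p (pmf_of_set P)) (x, \<sigma>))"
    by (simp add: sum.cartesian_product split_beta)
  also have "\<dots> = (\<Sum>x\<in>set_pmf p. \<Sum>\<sigma>\<in>P. f (x, \<sigma>) * (pmf p x / card P))"
    using assms by (intro sum.cong refl) (simp add: pmf_pair)
  also have "\<dots> = (\<Sum>\<sigma>\<in>P. \<Sum>x\<in>set_pmf p. pmf p x * f (x, \<sigma>)) / card P"
    by (subst sum.swap) (simp add: sum_divide_distrib mult_ac)
  finally show ?thesis .
qed

lemma set_pmf_of_set_permutations:
  assumes "finite S"
  shows "set_pmf (pmf_of_set {\<sigma>. \<sigma> permutes S}) = {\<sigma>. \<sigma> permutes S}"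
proof -
  have "{\<sigma>. \<sigma> permutes S} \<noteq> {}" using permutes_id by blast
  then show ?thesis using assms by (intro set_pmf_of_set) (simp_all add: finite_permutations)
qed

definition tv_sq_sum :: "nat \<Rightarrow> nat \<Rightarrow> nat \<Rightarrow> (nat \<Rightarrow> nat) pmf \<Rightarrow> (nat \<Rightarrow> nat) \<Rightarrow> (nat \<Rightarrow> nat) \<Rightarrow> real" where
  "tv_sq_sum q n \<theta> p x \<sigma> = (\<Sum>i\<in>{\<theta>..n}.
     (tv_dist q (cond_law p (\<sigma> ` {1..i - \<theta>}) (\<sigma> i) x) (cond_law p (\<sigma> ` {1..i - 1}) (\<sigma> i) x))^2)"

lemma expectation_tv_sq_sum_le_finite:
  assumes "1 \<le> q" "1 \<le> n" "1 \<le> \<theta>" and fin: "finite (set_pmf p)"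
    and range: "\<forall>x\<in>set_pmf p. \<forall>i\<in>{1..n}. x i \<in> {1..q}"
  shows "measure_pmf.expectation (pair_pmf p (pmf_of_set {\<sigma>. \<sigma> permutes {1..n}}))
           (\<lambda>(x, \<sigma>). tv_sq_sum q n \<theta> p x \<sigma>) \<le> (real \<theta> - 1) * ln (real q) / 2"
proof -
  let ?Perm = "{\<sigma>. \<sigma> permutes {1..n}}" and ?F = "prefix_entropy_sum p n"
  have "finite ?Perm" "card ?Perm = fact n" by (simp_all add: finite_permutations card_permutations)
  moreover have "?Perm \<noteq> {}" using permutes_id by blast
  ultimately have "measure_pmf.expectation (pair_pmf p (pmf_of_set ?Perm)) (\<lambda>(x, \<sigma>). tv_sq_sum q n \<theta> p x \<sigma>)
      = (\<Sum>\<sigma>\<in>?Perm. \<Sum>i\<in>{\<theta>..n}. \<Sum>x\<in>set_pmf p. pmf p x *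
            (tv_dist q (cond_law p (\<sigma> ` {1..i - \<theta>}) (\<sigma> i) x) (cond_law p (\<sigma> ` {1..i - 1}) (\<sigma> i) x))^2)
        / fact n"
    using fin by (simp add: expectation_pair_pmf_of_set tv_sq_sum_def sum_distrib_left sum.swap[of _ "{\<theta>..n}"])
  also have "\<dots> \<le> ((\<Sum>i\<in>{\<theta>..n}. (?F (i + 1 - \<theta>) - ?F (i - \<theta>)) - (?F i - ?F (i - 1))) / 2) / fact n"
    by (intro divide_right_mono sum_permutes_expected_tv_sq_le[OF fin range \<open>1 \<le> \<theta>\<close>]) simp
  also have "\<dots> \<le> ((real \<theta> - 1) * (fact n * ln (real q)) / 2) / fact n"
  proof -
    have "(\<Sum>i\<in>{\<theta>..n}. (?F (i + 1 - \<theta>) - ?F (i - \<theta>)) - (?F i - ?F (i - 1)))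
        \<le> (real \<theta> - 1) * (fact n * ln (real q))"
      using sum_shifted_diff_le[of \<theta> n "\<lambda>m. ?F m - ?F (m - 1)" "fact n * ln (real q)"]
        prefix_entropy_sum_diff_bounds[OF fin range \<open>1 \<le> q\<close>] \<open>1 \<le> \<theta>\<close> \<open>1 \<le> n\<close>
      by simp
    then show ?thesis by (intro divide_right_mono) simp_all
  qed
  also have "\<dots> = (real \<theta> - 1) * ln (real q) / 2"
    by simp
  finally show ?thesis .
qed

section \<open>Reduction to finite support\<close>

lemma finite_set_pmf_map_restrict:
  assumes "finite I" "finite V" "\<forall>x\<in>set_pmf p. \<forall>i\<in>I. x i \<in> V"
  shows "finite (set_pmf (map_pmf (\<lambda>y. restrict y I) p))"
proof (rule finite_subset)
  show "set_pmf (map_pmf (\<lambda>y. restrict y I) p) \<subseteq> PiE I (\<lambda>_. V)" using assms(3) by auto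
qed (simp add: assms finite_PiE)

lemma cond_law_map_restrict:
  assumes "J \<subseteq> I" "k \<in> I"
  shows "cond_law (map_pmf (\<lambda>y. restrict y I) p) J k (restrict x I) = cond_law p J k x"
proof
  fix a
  have "(\<lambda>y. restrict y I) -` {y. y k = a \<and> (\<forall>j\<in>J. y j = restrict x I j)}
      = {y. y k = a \<and> (\<forall>j\<in>J. y j = x j)}"
    "(\<lambda>y. restrict y I) -` {y. \<forall>j\<in>J. y j = restrict x I j} = {y. \<forall>j\<in>J. y j = x j}"
    using assms by auto
  then show "cond_law (map_pmf (\<lambda>y. restrict y I) p) J k (restrict x I) a = cond_law p J k x a"
    unfolding cond_law_def by simp
qed

lemma tv_sq_sum_map_restrict:
  assumes "\<sigma> permutes {1..n}" "1 \<le> \<theta>"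
  shows "tv_sq_sum q n \<theta> (map_pmf (\<lambda>y. restrict y {1..n}) p) (restrict x {1..n}) \<sigma>
       = tv_sq_sum q n \<theta> p x \<sigma>"
  unfolding tv_sq_sum_def
proof (intro sum.cong refl)
  fix i assume "i \<in> {\<theta>..n}"
  then have "\<sigma> ` {1..i - \<theta>} \<subseteq> \<sigma> ` {1..n}" "\<sigma> ` {1..i - 1} \<subseteq> \<sigma> ` {1..n}" "\<sigma> i \<in> \<sigma> ` {1..n}"
    using assms(2) by auto
  then show "(tv_dist q (cond_law (map_pmf (\<lambda>y. restrict y {1..n}) p) (\<sigma> ` {1..i - \<theta>}) (\<sigma> i) (restrict x {1..n}))
                       (cond_law (map_pmf (\<lambda>y. restrict y {1..n}) p) (\<sigma> ` {1..i - 1}) (\<sigma> i) (restrict x {1..n})))^2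
           = (tv_dist q (cond_law p (\<sigma> ` {1..i - \<theta>}) (\<sigma> i) x) (cond_law p (\<sigma> ` {1..i - 1}) (\<sigma> i) x))^2"
    unfolding permutes_image[OF assms(1)] by (simp add: cond_law_map_restrict)
qed

theorem lemma2p5:
  fixes q n \<theta> :: nat and p :: "(nat \<Rightarrow> nat) pmf"
  assumes "q \<ge> 1" and "n \<ge> 1" and "\<theta> \<ge> 1"
    and "\<forall>x\<in>set_pmf p. \<forall>i\<in>{1..n}. x i \<in> {1..q}"
  shows "measure_pmf.expectation (pair_pmf p (pmf_of_set {\<sigma>. \<sigma> permutes {1..n}}))
           (\<lambda>(x, \<sigma>). \<Sum>i\<in>{\<theta>..n}.
              (tv_dist q (cond_law p (\<sigma> ` {1..i - \<theta>}) (\<sigma> i) x)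
                         (cond_law p (\<sigma> ` {1..i - 1}) (\<sigma> i) x)) ^ 2)
         \<le> (real \<theta> - 1) * ln (real q) / 2"
proof -
  let ?r = "\<lambda>y :: nat \<Rightarrow> nat. restrict y {1..n}"
  let ?U = "pmf_of_set {\<sigma>. \<sigma> permutes {1..n}}" and ?p' = "map_pmf ?r p"
  have "measure_pmf.expectation (pair_pmf p ?U) (\<lambda>(x, \<sigma>). tv_sq_sum q n \<theta> p x \<sigma>)
      = measure_pmf.expectation (pair_pmf p ?U) (\<lambda>(x, \<sigma>). tv_sq_sum q n \<theta> ?p' (?r x) \<sigma>)"
    using tv_sq_sum_map_restrict[OF _ assms(3)]
    by (intro integral_cong_AE) (auto simp: AE_measure_pmf_iff set_pmf_of_set_permutations)
  also have "\<dots> = measure_pmf.expectation (map_pmf (\<lambda>(x, \<sigma>). (?r x, id \<sigma>)) (pair_pmf p ?U))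
                       (\<lambda>(x, \<sigma>). tv_sq_sum q n \<theta> ?p' x \<sigma>)"
    by (simp add: case_prod_unfold)
  also have "\<dots> = measure_pmf.expectation (pair_pmf ?p' ?U) (\<lambda>(x, \<sigma>). tv_sq_sum q n \<theta> ?p' x \<sigma>)"
    unfolding map_pair by simp
  also have "\<dots> \<le> (real \<theta> - 1) * ln (real q) / 2"
    using assms finite_set_pmf_map_restrict[of "{1..n}" "{1..q}" p]
    by (intro expectation_tv_sq_sum_le_finite) auto
  finally show ?thesis unfolding tv_sq_sum_def .
qed

end
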